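(* For every $n\in\mathbb N$, in the field $\mathbb Q(x)$ we have $$\frac{U_n}{U_{n+1}}=\left[0;2x-1,1,\underbrace{2(x-1),1,2(x-1),1,\dots,2(x-1),1}_{n\text{ copies of the pair }2(x-1),1}\right].$$
   Context: $U_n=U_n(x)$ denotes the Chebyshev polynomial of the second kind: $U_0=1$, $U_1=2x$, $U_{n+1}=2xU_n-U_{n-1}$ for $n\ge1$. For elements $a_0,a_1,\dots,a_m$ the finite continued fraction is $[a_0;a_1,\dots,a_m]=a_0+\cfrac{1}{a_1+\cfrac{1}{\ddots+\cfrac{1}{a_m}}}$. *)

theory Defs
  imports "HOL-Computational_Algebra.Polynomial" "HOL-Computational_Algebra.Fraction_Field"
begin

text \<open>The field Q(x) is rendered as the fraction field of rat poly: type rat poly fract.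
  The indeterminate x is the polynomial [:0, 1:] embedded via emb (p maps to p/1).\<close>

fun chebU :: "nat \<Rightarrow> rat poly" where
  "chebU 0 = 1"
| "chebU (Suc 0) = [:0, 2:]"
| "chebU (Suc (Suc n)) = [:0, 2:] * chebU (Suc n) - chebU n"

fun cfrac :: "'a::field list \<Rightarrow> 'a" where
  "cfrac [] = 0"
| "cfrac [a] = a"
| "cfrac (a # b # l) = a + 1 / cfrac (b # l)"

definition emb :: "rat poly \<Rightarrow> rat poly fract" where
  "emb p = Fract p 1"

definition X :: "rat poly fract" where
  "X = emb [:0, 1:]"

end

theory Submission
  imports Defs "HOL-Computational_Algebra.Polynomial_Factorial"
begin

text \<open>Put V(n) = U(n) - U(n-1), with U(-1) = 0. Then V(n+1) = 2(x-1) U(n) + V(n) and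
  U(n+1) = U(n) + V(n+1); these are precisely the recurrences for numerators and denominators of
  the periodic continued fraction [1; 2(x-1), 1, ..., 2(x-1), 1], which therefore equals
  U(n)/V(n). Prepending 0, 2x - 1 gives U(n) / ((2x-1) U(n) + V(n)) = U(n)/U(n+1).
  No denominator vanishes, since U(n) and V(n) take the values n + 1 and 1 at x = 1.\<close>

lemma cfrac_one_periodic:
  fixes c :: "'a::field" and p q :: "nat \<Rightarrow> 'a"
  assumes start: "q 0 = p 0"
    and q_Suc: "\<And>k. q (Suc k) = c * p k + q k"
    and p_Suc: "\<And>k. p (Suc k) = p k + q (Suc k)"
    and p_nonzero: "\<And>k. p k \<noteq> 0" and q_nonzero: "\<And>k. q k \<noteq> 0"
  shows "cfrac (1 # concat (replicate n [c, 1])) = p n / q n"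
proof (induction n)
  case 0
  show ?case using start q_nonzero[of 0] by simp
next
  case (Suc n)
  have "cfrac (1 # concat (replicate (Suc n) [c, 1]))
      = 1 + 1 / (c + 1 / (p n / q n))"
    by (simp add: Suc.IH)
  also have "c + 1 / (p n / q n) = q (Suc n) / p n"
    using p_nonzero[of n] by (simp add: q_Suc field_simps)
  also have "1 + 1 / (q (Suc n) / p n) = p (Suc n) / q (Suc n)"
    using q_nonzero[of "Suc n"] by (simp add: p_Suc field_simps)
  finally show ?case .
qed

fun chebU_pred :: "nat \<Rightarrow> rat poly" where
  "chebU_pred 0 = 0"
| "chebU_pred (Suc n) = chebU n"

definition chebV :: "nat \<Rightarrow> rat poly" where
  "chebV n = chebU n - chebU_pred n"

lemma chebU_Suc: "chebU (Suc n) = [:0, 2:] * chebU n - chebU_pred n"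
  by (cases n) auto

lemma chebU_Suc_eq_add_chebV: "chebU (Suc n) = chebU n + chebV (Suc n)"
  by (simp add: chebV_def)

lemma chebV_Suc: "chebV (Suc n) = [:-2, 2:] * chebU n + chebV n"
  by (simp add: chebV_def chebU_Suc algebra_simps numeral_poly)

lemma chebU_Suc_via_chebV: "chebU (Suc n) = [:-1, 2:] * chebU n + chebV n"
  by (simp add: chebV_def chebU_Suc algebra_simps numeral_poly)

lemma poly_chebU_1: "poly (chebU n) 1 = of_nat n + 1"
  by (induction n rule: chebU.induct) (auto simp: algebra_simps)

lemma chebU_nonzero: "chebU n \<noteq> 0"
  using poly_chebU_1[of n] by auto

lemma chebV_nonzero: "chebV n \<noteq> 0"
proof -
  have "poly (chebV n) 1 = 1"
    by (cases n) (auto simp: chebV_def poly_chebU_1)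
  then show ?thesis by auto
qed

lemma emb_eq_to_fract: "emb = to_fract"
  by (simp add: fun_eq_iff emb_def to_fract_def)

lemma to_fract_2: "to_fract 2 = 2"
  by (metis one_add_one to_fract_1 to_fract_add)

lemma two_X_minus_1: "2 * X - 1 = to_fract [:-1, 2:]"
proof -
  have "to_fract [:-1, 2 :: rat:] = to_fract (2 * [:0, 1:] - 1)"
    by (simp add: numeral_poly one_pCons)
  then show ?thesis
    by (simp only: to_fract_diff to_fract_mult to_fract_2 to_fract_1 X_def emb_eq_to_fract)
qed

lemma two_X_minus_2: "2 * (X - 1) = to_fract [:-2, 2:]"
proof -
  have "to_fract [:-2, 2 :: rat:] = to_fract (2 * ([:0, 1:] - 1))"
    by (simp add: numeral_poly one_pCons)
  then show ?thesis
    by (simp only: to_fract_diff to_fract_mult to_fract_2 to_fract_1 X_def emb_eq_to_fract)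
qed

lemma cfrac_periodic_eq_chebU_div_chebV:
  "cfrac (1 # concat (replicate n [2 * (X - 1), 1])) = to_fract (chebU n) / to_fract (chebV n)"
  unfolding two_X_minus_2
proof (rule cfrac_one_periodic)
  show "to_fract (chebV 0) = to_fract (chebU 0)"
    by (simp add: chebV_def)
  show "to_fract (chebV (Suc k)) = to_fract [:-2, 2:] * to_fract (chebU k) + to_fract (chebV k)"
    for k by (simp only: chebV_Suc to_fract_add to_fract_mult)
  show "to_fract (chebU (Suc k)) = to_fract (chebU k) + to_fract (chebV (Suc k))"
    for k by (simp only: chebU_Suc_eq_add_chebV to_fract_add)
qed (simp_all add: chebU_nonzero chebV_nonzero)

theorem theorem1p4:
  fixes n :: nat
  shows "emb (chebU n) / emb (chebU (Suc n)) =
    cfrac (0 # (2 * X - 1) # 1 # concat (replicate n [2 * (X - 1), 1]))"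
proof -
  have "cfrac (0 # (2 * X - 1) # 1 # concat (replicate n [2 * (X - 1), 1]))
      = 1 / (to_fract [:-1, 2:] + 1 / (to_fract (chebU n) / to_fract (chebV n)))"
    by (simp only: cfrac.simps two_X_minus_1 cfrac_periodic_eq_chebU_div_chebV add_0)
  also have "\<dots> = to_fract (chebU n) / to_fract (chebU (Suc n))"
  proof -
    have "to_fract (chebU (Suc n)) = to_fract [:-1, 2:] * to_fract (chebU n) + to_fract (chebV n)"
      by (simp only: chebU_Suc_via_chebV to_fract_add to_fract_mult)
    then show ?thesis
      using chebU_nonzero[of n] chebV_nonzero[of n] by (simp add: field_simps)
  qed
  finally show ?thesis
    by (simp add: emb_eq_to_fract)
qed

end
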